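(* Let $X$ be a compact metric space and $(f_n)_{n\ge1}$ a sequence of continuous maps $X\to X$ converging uniformly to a function $\phi\colon X\to X$. Then $\phi\circ f_1^p=f_1^{p+1}$ for every $p\in\mathbb{N}^*$.
   Context: $\mathbb{N}=\{1,2,\dots\}$, $\mathbb{N}^*$ the free ultrafilters on $\mathbb{N}$. For $p\in\mathbb{N}^*$, $p\text{-}\lim_n x_n$ is the unique $y$ with $\{n:x_n\in V\}\in p$ for all neighbourhoods $V$ of $y$. $f_1^n=f_n\circ\cdots\circ f_1$, and $f_1^p(x)=p\text{-}\lim_n f_1^n(x)$ for $p\in\mathbb{N}^*$. $p+1$ is the ultrafilter $\{A\subseteq\mathbb{N}:\{m: m+1\in A\}\in p\}$. *)

theory Defs
  imports "HOL-Analysis.Analysis"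
begin

definition ultrafilter_nat :: "nat set set \<Rightarrow> bool" where
  "ultrafilter_nat p \<longleftrightarrow>
     UNIV \<in> p \<and> {} \<notin> p \<and>
     (\<forall>A B. A \<in> p \<and> B \<in> p \<longrightarrow> A \<inter> B \<in> p) \<and>
     (\<forall>A B. A \<in> p \<and> A \<subseteq> B \<longrightarrow> B \<in> p) \<and>
     (\<forall>A. A \<in> p \<or> - A \<in> p)"

text \<open>Free ultrafilters: no finite set belongs to them (the points of N*).\<close>
definition free_ultrafilter_nat :: "nat set set \<Rightarrow> bool" where
  "free_ultrafilter_nat p \<longleftrightarrow> ultrafilter_nat p \<and> (\<forall>A\<in>p. infinite A)"

definition plim :: "nat set set \<Rightarrow> (nat \<Rightarrow> 'a::topological_space) \<Rightarrow> 'a" where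
  "plim p x = (THE y. \<forall>V. open V \<and> y \<in> V \<longrightarrow> {n. x n \<in> V} \<in> p)"

definition uf_succ :: "nat set set \<Rightarrow> nat set set" where
  "uf_succ p = {A. {m. m + 1 \<in> A} \<in> p}"

fun comp_seq :: "(nat \<Rightarrow> 'a \<Rightarrow> 'a) \<Rightarrow> nat \<Rightarrow> 'a \<Rightarrow> 'a" where
  "comp_seq f 0 = id"
| "comp_seq f (Suc n) = f (Suc n) \<circ> comp_seq f n"

definition comp_ulim :: "(nat \<Rightarrow> 'a::topological_space \<Rightarrow> 'a) \<Rightarrow> nat set set \<Rightarrow> 'a \<Rightarrow> 'a" where
  "comp_ulim f p x = plim p (\<lambda>n. comp_seq f n x)"

end

theory Submission
  imports Defs
begin

text \<open>Regard p as a filter F on the naturals: then f_1^n(x) converges along F to some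
L = f_1^p(x) by compactness, and p + 1 is the image filter of F under Suc. Along F the
indices tend to infinity, since p is free; so uniform convergence of f_n to the continuous
map \<phi> gives f_{n+1}(f_1^n(x)) \<rightarrow> \<phi>(L) along F, i.e. f_1^m(x) \<rightarrow> \<phi>(L) along p + 1.\<close>

definition filter_of :: "nat set set \<Rightarrow> nat filter" where
  "filter_of p = Abs_filter (\<lambda>P. {n. P n} \<in> p)"

lemma eventually_filter_of:
  assumes "ultrafilter_nat p"
  shows "eventually P (filter_of p) \<longleftrightarrow> {n. P n} \<in> p"
proof -
  have "is_filter (\<lambda>P. {n. P n} \<in> p)"
  proof
    show "{n. True} \<in> p" using assms by (simp add: ultrafilter_nat_def)
  next
    fix P Q assume "{n. P n} \<in> p" "{n. Q n} \<in> p"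
    then have "{n. P n} \<inter> {n. Q n} \<in> p" using assms by (simp add: ultrafilter_nat_def)
    then show "{n. P n \<and> Q n} \<in> p" by (simp add: Collect_conj_eq)
  next
    fix P Q assume "\<forall>n. P n \<longrightarrow> Q n" "{n. P n} \<in> p"
    then show "{n. Q n} \<in> p" using assms unfolding ultrafilter_nat_def by blast
  qed
  then show ?thesis by (simp add: filter_of_def eventually_Abs_filter)
qed

lemma filter_of_ne_bot: "ultrafilter_nat p \<Longrightarrow> filter_of p \<noteq> bot"
  by (simp add: trivial_limit_def eventually_filter_of ultrafilter_nat_def)

lemma filter_of_ultra:
  assumes "ultrafilter_nat p"
  shows "eventually P (filter_of p) \<or> eventually (\<lambda>n. \<not> P n) (filter_of p)"
proof -
  have "- {n. P n} = {n. \<not> P n}" by blast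
  then show ?thesis using assms by (auto simp: eventually_filter_of ultrafilter_nat_def)
qed

lemma filter_of_le_sequentially:
  assumes "free_ultrafilter_nat p"
  shows "filter_of p \<le> sequentially"
  unfolding le_sequentially
proof
  fix N
  have up: "ultrafilter_nat p" using assms by (simp add: free_ultrafilter_nat_def)
  have "{..<N} \<notin> p" using assms by (auto simp: free_ultrafilter_nat_def)
  moreover have "- {..<N} = {n. N \<le> n}" by auto
  ultimately show "eventually (\<lambda>n. N \<le> n) (filter_of p)"
    using up by (metis eventually_filter_of ultrafilter_nat_def)
qed

lemma eventually_uf_succ:
  assumes "ultrafilter_nat p"
  shows "{n. P n} \<in> uf_succ p \<longleftrightarrow> eventually P (filtermap Suc (filter_of p))"
  using assms by (simp add: uf_succ_def eventually_filtermap eventually_filter_of)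

lemma plim_eqI:
  fixes x :: "nat \<Rightarrow> 'a::t2_space"
  assumes q: "\<And>P. {n. P n} \<in> q \<longleftrightarrow> eventually P F"
    and "F \<noteq> bot" and lim: "(x \<longlongrightarrow> z) F"
  shows "plim q x = z"
  unfolding plim_def
proof (rule the_equality)
  show "\<forall>V. open V \<and> z \<in> V \<longrightarrow> {n. x n \<in> V} \<in> q"
    using lim by (simp add: q tendsto_def)
next
  fix y assume "\<forall>V. open V \<and> y \<in> V \<longrightarrow> {n. x n \<in> V} \<in> q"
  then have "(x \<longlongrightarrow> y) F" by (simp add: q tendsto_def)
  then show "y = z" using tendsto_unique[OF \<open>F \<noteq> bot\<close>] lim by blast
qed

lemma ultrafilter_tendsto_in_compact:
  fixes x :: "'b \<Rightarrow> 'a::topological_space"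
  assumes "compact X" and "F \<noteq> bot"
    and ultra: "\<And>P. eventually P F \<or> eventually (\<lambda>n. \<not> P n) F"
    and "eventually (\<lambda>n. x n \<in> X) F"
  shows "\<exists>z\<in>X. (x \<longlongrightarrow> z) F"
proof -
  have "filtermap x F \<noteq> bot" "eventually (\<lambda>y. y \<in> X) (filtermap x F)"
    using assms by (simp_all add: filtermap_bot_iff eventually_filtermap)
  then obtain z where "z \<in> X" and cluster: "inf (nhds z) (filtermap x F) \<noteq> bot"
    using \<open>compact X\<close> unfolding compact_filter by blast
  have "eventually (\<lambda>n. x n \<in> S) F" if "open S" "z \<in> S" for S
  proof (rule ccontr)
    assume "\<not> eventually (\<lambda>n. x n \<in> S) F"
    then have "eventually (\<lambda>y. y \<notin> S) (filtermap x F)"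
      using ultra[of "\<lambda>n. x n \<in> S"] by (simp add: eventually_filtermap)
    moreover have "eventually (\<lambda>y. y \<in> S) (nhds z)"
      using that by (rule eventually_nhds_in_open)
    ultimately have "eventually (\<lambda>_. False) (inf (nhds z) (filtermap x F))"
      unfolding eventually_inf by blast
    with cluster show False by (simp add: trivial_limit_def)
  qed
  with \<open>z \<in> X\<close> show ?thesis by (auto simp: tendsto_def)
qed

lemma tendsto_uniform_limit_diagonal:
  fixes f :: "nat \<Rightarrow> 'a::metric_space \<Rightarrow> 'b::metric_space"
  assumes unif: "uniform_limit X f g sequentially" and "continuous_on X g"
    and "F \<le> sequentially" and "(y \<longlongrightarrow> L) F" and "L \<in> X"
    and yX: "eventually (\<lambda>n. y n \<in> X) F"
  shows "((\<lambda>n. f n (y n)) \<longlongrightarrow> g L) F"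
proof (rule tendstoI)
  fix e :: real assume "e > 0"
  then have "e / 2 > 0" by simp
  have "((\<lambda>n. g (y n)) \<longlongrightarrow> g L) F"
    using continuous_on_tendsto_compose assms(2,4,5) yX by blast
  then have near: "eventually (\<lambda>n. dist (g (y n)) (g L) < e / 2) F"
    using \<open>e / 2 > 0\<close> by (rule tendstoD)
  have "eventually (\<lambda>n. \<forall>z\<in>X. dist (f n z) (g z) < e / 2) F"
    using filter_leD[OF \<open>F \<le> sequentially\<close> uniform_limitD[OF unif \<open>e / 2 > 0\<close>]] .
  with near yX show "eventually (\<lambda>n. dist (f n (y n)) (g L) < e) F"
  proof eventually_elim
    case (elim n)
    then have "dist (f n (y n)) (g (y n)) < e / 2" by blast
    with elim show ?case using dist_triangle[of "f n (y n)" "g L" "g (y n)"] by linarith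
  qed
qed

lemma comp_seq_in:
  assumes "\<And>n. n \<ge> 1 \<Longrightarrow> f n ` X \<subseteq> X" "x \<in> X" shows "comp_seq f n x \<in> X"
  using assms by (induction n) auto

theorem theorem3p5:
  fixes X :: "'a::metric_space set"
    and f :: "nat \<Rightarrow> 'a \<Rightarrow> 'a"
    and \<phi> :: "'a \<Rightarrow> 'a"
    and p :: "nat set set"
  assumes "compact X"
    and "\<And>n. n \<ge> 1 \<Longrightarrow> continuous_on X (f n)"
    and "\<And>n. n \<ge> 1 \<Longrightarrow> f n ` X \<subseteq> X"
    and "\<phi> ` X \<subseteq> X"
    and "uniform_limit X f \<phi> sequentially"
    and "free_ultrafilter_nat p"
  shows "\<forall>x\<in>X. \<phi> (comp_ulim f p x) = comp_ulim f (uf_succ p) x"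
proof
  fix x assume "x \<in> X"
  have up: "ultrafilter_nat p" using assms(6) by (simp add: free_ultrafilter_nat_def)
  define F where "F = filter_of p"
  define y where "y = (\<lambda>n. comp_seq f n x)"
  have p_F: "\<And>P. {n. P n} \<in> p \<longleftrightarrow> eventually P F"
    and succ_F: "\<And>P. {n. P n} \<in> uf_succ p \<longleftrightarrow> eventually P (filtermap Suc F)"
    using eventually_filter_of[OF up] eventually_uf_succ[OF up] by (simp_all add: F_def)
  have "F \<noteq> bot" "F \<le> sequentially"
    using filter_of_ne_bot[OF up] filter_of_le_sequentially[OF assms(6)] by (simp_all add: F_def)
  have "eventually (\<lambda>n. y n \<in> X) F"
    using comp_seq_in[OF assms(3) \<open>x \<in> X\<close>] by (simp add: y_def)
  then obtain L where "L \<in> X" and lim: "(y \<longlongrightarrow> L) F"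
    using ultrafilter_tendsto_in_compact[OF assms(1) \<open>F \<noteq> bot\<close>] filter_of_ultra[OF up]
    unfolding F_def by blast
  have "continuous_on X \<phi>"
    using uniform_limit_theorem[OF _ assms(5)] assms(2) eventually_sequentially by force
  moreover have "uniform_limit X (\<lambda>n. f (Suc n)) \<phi> sequentially"
    using assms(5) by (simp add: filterlim_sequentially_Suc)
  ultimately have "((\<lambda>n. f (Suc n) (y n)) \<longlongrightarrow> \<phi> L) F"
    using tendsto_uniform_limit_diagonal \<open>F \<le> sequentially\<close> lim \<open>L \<in> X\<close>
      \<open>eventually (\<lambda>n. y n \<in> X) F\<close> by blast
  then have "(y \<longlongrightarrow> \<phi> L) (filtermap Suc F)"
    by (simp add: filterlim_filtermap y_def)
  then have "comp_ulim f (uf_succ p) x = \<phi> L"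
    unfolding comp_ulim_def y_def[symmetric]
    using \<open>F \<noteq> bot\<close> by (intro plim_eqI[OF succ_F]) (simp_all add: filtermap_bot_iff)
  moreover have "comp_ulim f p x = L"
    unfolding comp_ulim_def y_def[symmetric] by (rule plim_eqI[OF p_F \<open>F \<noteq> bot\<close> lim])
  ultimately show "\<phi> (comp_ulim f p x) = comp_ulim f (uf_succ p) x" by simp
qed

end
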